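(* Let $(S,\mathcal{D}_S)$ be an $(n,\delta)$-indexing algorithm over alphabet $\Sigma_S$ with at most $k$ misdecodings. Let $c\in\Sigma_{\mathcal C}^n$ be any codeword, sent via the indexing procedure. Then for every corruption consisting of at most $n\delta$ insertions and deletions, the string $m'\in(\Sigma_{\mathcal C}\cup\{?\})^n$ produced by the indexing procedure has half-error distance at most $n\delta+2k$ from $c$. If moreover $(S,\mathcal{D}_S)$ is error-free, this half-error distance is at most $n\delta+k$.
   Context: Indexing problem. Fix $n$, $\delta$, and a string $S\in\Sigma_S^n$. An adversary applies at most $n\delta$ insertions and deletions to $S$, yielding a received string $S_\tau$; this is described by an order-preserving alignment in which each symbol $S[i]$ is either deleted or delivered unchanged as a unique symbol $S_\tau[j]$, and each symbol of $S_\tau$ is either delivered from a unique $S[i]$ or inserted. Position $j$ of $S_\tau$ is successfully transmitted if it was delivered from some $S[i]$; it is then correctly decoded if the algorithm outputs $i$ for it. An $(n,\delta)$-indexing algorithm $(S,\mathcal D_S)$ consists of $S$ and an algorithm $\mathcal D_S$ which, for any such corruption, outputs for every position of $S_\tau$ either $\bot$ or an index in $\{1,\dots,n\}$. It has at most $k$ misdecodings if for every corruption with at most $n\delta$ insertions and deletions, at most $k$ successfully transmitted positions are not correctly decoded (a $\bot$ output counts as not correctly decoded). It is error-free if every non-$\bot$ output is correct, i.e., it never outputs an index other than the true origin index of a successfully transmitted symbol (and outputs $\bot$ for inserted symbols). Indexing procedure: given a codeword $c\in\Sigma_{\mathcal C}^n$, the sender transmits the string over $\Sigma_{\mathcal C}\times\Sigma_S$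 whose $i$-th symbol is $(c[i],S[i])$. The channel applies at most $n\delta$ insertions and deletions. The receiver applies $\mathcal D_S$ to the sequence of second components of the received string; then for each $i\in\{1,\dots,n\}$, if exactly one received position $j$ was assigned index $i$, it sets $m'_i$ to the first component of the $j$-th received symbol, and otherwise sets $m'_i=?$ (an erasure). Half-error distance between $c$ and $m'$: the number of $i$ with $m'_i=?$ plus twice the number of $i$ with $m'_i\neq ?$ and $m'_i\neq c[i]$. *)

theory Defs
  imports Complex_Main
begin

text \<open>Conventions: strings are lists; positions and indices are 0-based
  (the paper's index i in 1..n corresponds to i-1 here).  A decoder output
  None stands for the symbol bottom.\<close>

text \<open>An order-preserving alignment A between x and y: each pair (i,j) in A
  says that x!i is delivered unchanged as y!j.\<close>
definition alignment :: "'a list \<Rightarrow> 'a list \<Rightarrow> (nat \<times> nat) set \<Rightarrow> bool" where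
  "alignment x y A \<longleftrightarrow>
     A \<subseteq> {..<length x} \<times> {..<length y} \<and>
     (\<forall>(i,j)\<in>A. \<forall>(i',j')\<in>A. i < i' \<longleftrightarrow> j < j') \<and>
     (\<forall>(i,j)\<in>A. y ! j = x ! i)"

definition num_edits :: "'a list \<Rightarrow> 'a list \<Rightarrow> (nat \<times> nat) set \<Rightarrow> nat" where
  "num_edits x y A = (length x - card A) + (length y - card A)"

definition corruption :: "real \<Rightarrow> 'a list \<Rightarrow> 'a list \<Rightarrow> (nat \<times> nat) set \<Rightarrow> bool" where
  "corruption bud x y A \<longleftrightarrow> alignment x y A \<and> real (num_edits x y A) \<le> bud"

definition indexing_algorithm ::
  "nat \<Rightarrow> real \<Rightarrow> 's list \<Rightarrow> ('s list \<Rightarrow> nat \<Rightarrow> nat option) \<Rightarrow> bool" where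
  "indexing_algorithm n \<delta> S D \<longleftrightarrow> length S = n \<and>
     (\<forall>y A. corruption (real n * \<delta>) S y A \<longrightarrow>
        (\<forall>j < length y. D y j = None \<or> (\<exists>i < n. D y j = Some i)))"

definition at_most_misdecodings ::
  "nat \<Rightarrow> real \<Rightarrow> 's list \<Rightarrow> ('s list \<Rightarrow> nat \<Rightarrow> nat option) \<Rightarrow> nat \<Rightarrow> bool" where
  "at_most_misdecodings n \<delta> S D k \<longleftrightarrow>
     (\<forall>y A. corruption (real n * \<delta>) S y A \<longrightarrow>
        card {j. \<exists>i. (i, j) \<in> A \<and> D y j \<noteq> Some i} \<le> k)"

definition error_free ::
  "nat \<Rightarrow> real \<Rightarrow> 's list \<Rightarrow> ('s list \<Rightarrow> nat \<Rightarrow> nat option) \<Rightarrow> bool" where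
  "error_free n \<delta> S D \<longleftrightarrow>
     (\<forall>y A. corruption (real n * \<delta>) S y A \<longrightarrow>
        (\<forall>j < length y. D y j \<noteq> None \<longrightarrow> (\<exists>i. (i, j) \<in> A \<and> D y j = Some i)))"

definition indexing_send :: "'c list \<Rightarrow> 's list \<Rightarrow> ('c \<times> 's) list" where
  "indexing_send c S = zip c S"

text \<open>Receiver of the indexing procedure: m'_i = Some (first component of the
  unique received position assigned index i), or None (erasure '?').\<close>
definition indexing_receive ::
  "nat \<Rightarrow> ('s list \<Rightarrow> nat \<Rightarrow> nat option) \<Rightarrow> ('c \<times> 's) list \<Rightarrow> 'c option list" where
  "indexing_receive n D R =
     map (\<lambda>i. let J = {j. j < length R \<and> D (map snd R) j = Some i} in
               if card J = 1 then Some (fst (R ! (THE j. j \<in> J))) else None) [0..<n]"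

definition half_error_distance :: "'c list \<Rightarrow> 'c option list \<Rightarrow> nat" where
  "half_error_distance c m =
     card {i. i < length c \<and> m ! i = None}
     + 2 * card {i. i < length c \<and> m ! i \<noteq> None \<and> m ! i \<noteq> Some (c ! i)}"

end

theory Submission
  imports Defs
begin

text \<open>An index i can be wrong in m' only if it was not correctly decoded and some
  incorrect output of the decoder points to it; it can be erased only if one of
  these two things happens.  Charging an erasure 1 and an error 2, the half-error
  distance is therefore at most the number of indices without a correct decoding
  plus the number of incorrect outputs.  The former are deletions or
  misdecodings, the latter insertions or misdecodings, which gives
  n\<delta> + 2k; an error-free decoder has no incorrect outputs at all, which gives
  n\<delta> + k.\<close>

lemma alignment_fst_eq_iff_snd_eq:
  assumes "alignment x y A" "(i, j) \<in> A" "(i', j') \<in> A"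
  shows "i = i' \<longleftrightarrow> j = j'"
proof -
  have mono: "\<forall>(i, j)\<in>A. \<forall>(i', j')\<in>A. i < i' \<longleftrightarrow> j < j'"
    using assms(1) unfolding alignment_def by blast
  have "i < i' \<longleftrightarrow> j < j'" "i' < i \<longleftrightarrow> j' < j" using mono assms(2,3) by fast+
  then show ?thesis by (meson linorder_neqE_nat order_less_irrefl)
qed

lemma alignment_inj_on_fst:
  assumes "alignment x y A" shows "inj_on fst A"
proof (rule inj_onI)
  fix p q assume pq: "p \<in> A" "q \<in> A" "fst p = fst q"
  have "(fst p, snd p) \<in> A" "(fst q, snd q) \<in> A" using pq(1,2) by simp_all
  then have "fst p = fst q \<longleftrightarrow> snd p = snd q" by (rule alignment_fst_eq_iff_snd_eq[OF assms])
  then show "p = q" using pq(3) by (simp add: prod_eq_iff)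
qed

lemma alignment_inj_on_snd:
  assumes "alignment x y A" shows "inj_on snd A"
proof (rule inj_onI)
  fix p q assume pq: "p \<in> A" "q \<in> A" "snd p = snd q"
  have "(fst p, snd p) \<in> A" "(fst q, snd q) \<in> A" using pq(1,2) by simp_all
  then have "fst p = fst q \<longleftrightarrow> snd p = snd q" by (rule alignment_fst_eq_iff_snd_eq[OF assms])
  then show "p = q" using pq(3) by (simp add: prod_eq_iff)
qed

lemma alignment_subset: "alignment x y A \<Longrightarrow> A \<subseteq> {..<length x} \<times> {..<length y}"
  unfolding alignment_def by blast

lemma alignment_nth: "alignment x y A \<Longrightarrow> (i, j) \<in> A \<Longrightarrow> y ! j = x ! i"
  unfolding alignment_def by blast

lemma alignment_finite: "alignment x y A \<Longrightarrow> finite A"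
  using alignment_subset finite_subset[of A "{..<length x} \<times> {..<length y}"] by auto

lemma alignment_map: "alignment x y A \<Longrightarrow> alignment (map f x) (map f y) A"
  unfolding alignment_def by (force simp: subset_iff)

lemma corruption_map: "corruption bud x y A \<Longrightarrow> corruption bud (map f x) (map f y) A"
  unfolding corruption_def num_edits_def by (simp add: alignment_map)

definition correctly_decoded :: "(nat \<times> nat) set \<Rightarrow> (nat \<Rightarrow> nat option) \<Rightarrow> nat \<Rightarrow> bool" where
  "correctly_decoded A d i \<longleftrightarrow> (\<exists>j. (i, j) \<in> A \<and> d j = Some i)"

definition misdecoded_positions :: "(nat \<times> nat) set \<Rightarrow> (nat \<Rightarrow> nat option) \<Rightarrow> nat set" where
  "misdecoded_positions A d = {j. \<exists>i. (i, j) \<in> A \<and> d j \<noteq> Some i}"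

definition incorrect_outputs :: "(nat \<times> nat) set \<Rightarrow> (nat \<Rightarrow> nat option) \<Rightarrow> nat \<Rightarrow> nat set" where
  "incorrect_outputs A d len =
     {j. j < len \<and> d j \<noteq> None \<and> \<not> (\<exists>i. (i, j) \<in> A \<and> d j = Some i)}"

lemma finite_misdecoded_positions:
  assumes "alignment x y A"
  shows "finite (misdecoded_positions A d)"
proof -
  have "misdecoded_positions A d \<subseteq> snd ` A"
    unfolding misdecoded_positions_def by force
  then show ?thesis using alignment_finite[OF assms] finite_subset by blast
qed

lemma card_not_correctly_decoded_le:
  assumes al: "alignment x y A"
  shows "card {i. i < length x \<and> \<not> correctly_decoded A d i}
         \<le> (length x - card A) + card (misdecoded_positions A d)"
proof -
  let ?M = "misdecoded_positions A d"
  let ?P = "{p \<in> A. snd p \<in> ?M}"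
  have finA: "finite A" using alignment_finite[OF al] .
  have "{i. i < length x \<and> \<not> correctly_decoded A d i} \<subseteq> ({..<length x} - fst ` A) \<union> fst ` ?P"
    unfolding correctly_decoded_def misdecoded_positions_def by force
  then have "card {i. i < length x \<and> \<not> correctly_decoded A d i}
             \<le> card (({..<length x} - fst ` A) \<union> fst ` ?P)"
    using finA by (intro card_mono) auto
  also have "\<dots> \<le> card ({..<length x} - fst ` A) + card (fst ` ?P)"
    by (rule card_Un_le)
  also have "card ({..<length x} - fst ` A) = length x - card A"
    using alignment_subset[OF al] card_image[OF alignment_inj_on_fst[OF al]] finA
    by (subst card_Diff_subset) auto
  also have "card (fst ` ?P) = card (snd ` ?P)"
    using alignment_inj_on_fst[OF al] alignment_inj_on_snd[OF al]
    by (simp add: card_image inj_on_subset)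
  also have "\<dots> \<le> card ?M"
    by (rule card_mono[OF finite_misdecoded_positions[OF al]]) auto
  finally show ?thesis by simp
qed

lemma card_incorrect_outputs_le:
  assumes al: "alignment x y A"
  shows "card (incorrect_outputs A d (length y))
         \<le> (length y - card A) + card (misdecoded_positions A d)"
proof -
  have finA: "finite A" using alignment_finite[OF al] .
  have "incorrect_outputs A d (length y) \<subseteq> ({..<length y} - snd ` A) \<union> misdecoded_positions A d"
    unfolding incorrect_outputs_def misdecoded_positions_def by force
  then have "card (incorrect_outputs A d (length y))
             \<le> card (({..<length y} - snd ` A) \<union> misdecoded_positions A d)"
    using finite_misdecoded_positions[OF al] by (intro card_mono) auto
  also have "\<dots> \<le> card ({..<length y} - snd ` A) + card (misdecoded_positions A d)"
    by (rule card_Un_le)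
  also have "card ({..<length y} - snd ` A) = length y - card A"
    using alignment_subset[OF al] card_image[OF alignment_inj_on_snd[OF al]] finA
    by (subst card_Diff_subset) auto
  finally show ?thesis by simp
qed

lemma error_free_incorrect_outputs_empty:
  assumes "error_free n \<delta> S D" "corruption (real n * \<delta>) S y A"
  shows "incorrect_outputs A (D y) (length y) = {}"
  using assms unfolding error_free_def incorrect_outputs_def by blast

lemma nth_indexing_receive_eq_Some_iff:
  assumes "i < n"
  shows "indexing_receive n D R ! i = Some v \<longleftrightarrow>
         (\<exists>j. {j'. j' < length R \<and> D (map snd R) j' = Some i} = {j} \<and> fst (R ! j) = v)"
proof -
  let ?J = "{j'. j' < length R \<and> D (map snd R) j' = Some i}"
  have receive: "indexing_receive n D R ! i
        = (if card ?J = 1 then Some (fst (R ! (THE j. j \<in> ?J))) else None)"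
    using assms by (simp add: indexing_receive_def)
  show ?thesis
  proof
    assume "indexing_receive n D R ! i = Some v"
    then have card: "card ?J = 1" and v: "fst (R ! (THE j. j \<in> ?J)) = v"
      using receive by (simp_all split: if_splits)
    from card obtain j where "?J = {j}" by (rule card_1_singletonE)
    then show "\<exists>j. ?J = {j} \<and> fst (R ! j) = v" using v by auto
  next
    assume "\<exists>j. ?J = {j} \<and> fst (R ! j) = v"
    then obtain j where "?J = {j}" "fst (R ! j) = v" by blast
    then show "indexing_receive n D R ! i = Some v" using receive by simp
  qed
qed

lemma indexing_receive_erasure:
  assumes al: "alignment x R A" and i: "i < n"
    and erased: "indexing_receive n D R ! i = None"
    and cd: "correctly_decoded A (D (map snd R)) i"
  shows "\<exists>j \<in> incorrect_outputs A (D (map snd R)) (length R). D (map snd R) j = Some i"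
proof -
  let ?d = "D (map snd R)"
  let ?J = "{j'. j' < length R \<and> ?d j' = Some i}"
  obtain j0 where j0: "(i, j0) \<in> A" "?d j0 = Some i"
    using cd unfolding correctly_decoded_def by blast
  have "j0 \<in> ?J" using j0 alignment_subset[OF al] by auto
  moreover have "?J \<noteq> {j0}"
  proof
    assume "?J = {j0}"
    then have "indexing_receive n D R ! i = Some (fst (R ! j0))"
      using nth_indexing_receive_eq_Some_iff[OF i, of D R "fst (R ! j0)"] by blast
    then show False using erased by simp
  qed
  ultimately have "\<exists>j \<in> ?J. j \<noteq> j0" by auto
  then obtain j where j: "j < length R" "?d j = Some i" "j \<noteq> j0" by auto
  have "\<not> (\<exists>i'. (i', j) \<in> A \<and> ?d j = Some i')"
  proof
    assume "\<exists>i'. (i', j) \<in> A \<and> ?d j = Some i'"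
    then have "(i, j) \<in> A" using j(2) by auto
    then show False using alignment_fst_eq_iff_snd_eq[OF al _ j0(1)] j(3) by blast
  qed
  then have "j \<in> incorrect_outputs A ?d (length R)"
    using j unfolding incorrect_outputs_def by auto
  then show ?thesis using j by blast
qed

lemma indexing_receive_wrong:
  assumes al: "alignment x R A" and i: "i < n"
    and wrong: "indexing_receive n D R ! i = Some v" "v \<noteq> fst (x ! i)"
  shows "\<not> correctly_decoded A (D (map snd R)) i
         \<and> (\<exists>j \<in> incorrect_outputs A (D (map snd R)) (length R). D (map snd R) j = Some i)"
proof -
  let ?d = "D (map snd R)"
  have "\<exists>j. {j'. j' < length R \<and> ?d j' = Some i} = {j} \<and> fst (R ! j) = v"
    using wrong(1) nth_indexing_receive_eq_Some_iff[OF i, of D R v] by simp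
  then obtain j where J: "{j'. j' < length R \<and> ?d j' = Some i} = {j}" and v: "fst (R ! j) = v"
    by blast
  have j: "j < length R" "?d j = Some i" using J by auto
  have nA: "(i, j) \<notin> A"
  proof
    assume "(i, j) \<in> A"
    then have "R ! j = x ! i" by (rule alignment_nth[OF al])
    then show False using v wrong(2) by simp
  qed
  have "\<not> correctly_decoded A ?d i"
  proof
    assume "correctly_decoded A ?d i"
    then obtain j' where j': "(i, j') \<in> A" "?d j' = Some i"
      unfolding correctly_decoded_def by blast
    then have "j' < length R" using alignment_subset[OF al] by auto
    then have "j' = j" using J j'(2) by auto
    then show False using j'(1) nA by simp
  qed
  moreover have "j \<in> incorrect_outputs A ?d (length R)"
    using j nA unfolding incorrect_outputs_def by auto
  ultimately show ?thesis using j by blast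
qed

lemma card_plus_twice_card_le:
  assumes fin: "finite P" "finite Q"
    and sub: "E \<subseteq> P \<union> Q" "W \<subseteq> P \<inter> Q" and disj: "E \<inter> W = {}"
  shows "card E + 2 * card W \<le> card P + card Q"
proof -
  have "card (E \<union> W) + card W \<le> card (P \<union> Q) + card (P \<inter> Q)"
    using fin sub by (intro add_mono card_mono) auto
  moreover have "finite E" "finite W"
    using fin sub by (meson finite_Int finite_UnI rev_finite_subset)+
  then have "card (E \<union> W) = card E + card W" using disj by (rule card_Un_disjoint)
  ultimately show ?thesis using card_Un_Int[OF fin] by linarith
qed

lemma half_error_distance_indexing_receive_le:
  assumes al: "alignment x R A" and len: "length x = n"
  shows "half_error_distance (map fst x) (indexing_receive n D R)
         \<le> card {i. i < n \<and> \<not> correctly_decoded A (D (map snd R)) i}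
           + card (incorrect_outputs A (D (map snd R)) (length R))"
proof -
  let ?d = "D (map snd R)" and ?m = "indexing_receive n D R"
  let ?B = "incorrect_outputs A ?d (length R)"
  let ?U = "{i. i < n \<and> \<not> correctly_decoded A ?d i}"
  let ?H = "{i. i < n \<and> (\<exists>j \<in> ?B. ?d j = Some i)}"
  let ?E = "{i. i < n \<and> ?m ! i = None}"
  let ?W = "{i. i < n \<and> ?m ! i \<noteq> None \<and> ?m ! i \<noteq> Some (map fst x ! i)}"
  have finB: "finite ?B" unfolding incorrect_outputs_def by simp
  have "?E \<subseteq> ?U \<union> ?H"
  proof
    fix i assume "i \<in> ?E"
    then show "i \<in> ?U \<union> ?H" using indexing_receive_erasure[OF al, of i n D] by auto
  qed
  moreover have "?W \<subseteq> ?U \<inter> ?H"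
  proof
    fix i assume i: "i \<in> ?W"
    then obtain v where "?m ! i = Some v" "v \<noteq> fst (x ! i)" using len by auto
    then show "i \<in> ?U \<inter> ?H" using i indexing_receive_wrong[OF al, of i n D v] by auto
  qed
  ultimately have "card ?E + 2 * card ?W \<le> card ?U + card ?H"
    by (rule card_plus_twice_card_le[rotated 2]) auto
  moreover have "card ?H \<le> card ?B"
  proof -
    have "?H \<subseteq> (\<lambda>j. the (?d j)) ` ?B"
    proof
      fix i assume "i \<in> ?H"
      then obtain j where "j \<in> ?B" "?d j = Some i" by blast
      then show "i \<in> (\<lambda>j. the (?d j)) ` ?B" by (metis image_eqI option.sel)
    qed
    then have "card ?H \<le> card ((\<lambda>j. the (?d j)) ` ?B)"
      using finB by (intro card_mono) auto
    also have "\<dots> \<le> card ?B" using finB by (rule card_image_le)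
    finally show ?thesis .
  qed
  moreover have "half_error_distance (map fst x) ?m = card ?E + 2 * card ?W"
    unfolding half_error_distance_def using len by simp
  ultimately show ?thesis by linarith
qed

lemma half_error_distance_indexing_receive_le_num_edits:
  fixes D
  assumes al: "alignment x R A" and len: "length x = n"
  defines "M \<equiv> card (misdecoded_positions A (D (map snd R)))"
  shows "half_error_distance (map fst x) (indexing_receive n D R) \<le> num_edits x R A + 2 * M"
    and "incorrect_outputs A (D (map snd R)) (length R) = {} \<Longrightarrow>
         half_error_distance (map fst x) (indexing_receive n D R) \<le> num_edits x R A + M"
proof -
  let ?d = "D (map snd R)"
  note h = half_error_distance_indexing_receive_le[OF al len, of D]
  have U: "card {i. i < n \<and> \<not> correctly_decoded A ?d i} \<le> (n - card A) + M"
    using card_not_correctly_decoded_le[OF al, of ?d] unfolding len M_def .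
  have B: "card (incorrect_outputs A ?d (length R)) \<le> (length R - card A) + M"
    using card_incorrect_outputs_le[OF al, of ?d] unfolding M_def .
  have edits: "num_edits x R A = (n - card A) + (length R - card A)"
    using len by (simp add: num_edits_def)
  show "half_error_distance (map fst x) (indexing_receive n D R) \<le> num_edits x R A + 2 * M"
    using h U B edits by linarith
  show "half_error_distance (map fst x) (indexing_receive n D R) \<le> num_edits x R A + M"
    if "incorrect_outputs A ?d (length R) = {}"
    using h U edits that by simp
qed

theorem theorem10:
  fixes n k :: nat and \<delta> :: real
    and S :: "'s list" and D :: "'s list \<Rightarrow> nat \<Rightarrow> nat option"
    and c :: "'c list" and R :: "('c \<times> 's) list" and A :: "(nat \<times> nat) set"
  assumes "indexing_algorithm n \<delta> S D"
    and "at_most_misdecodings n \<delta> S D k"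
    and "length c = n"
    and "corruption (real n * \<delta>) (indexing_send c S) R A"
  shows "real (half_error_distance c (indexing_receive n D R)) \<le> real n * \<delta> + 2 * real k
         \<and> (error_free n \<delta> S D \<longrightarrow>
              real (half_error_distance c (indexing_receive n D R)) \<le> real n * \<delta> + real k)"
proof -
  let ?x = "zip c S" and ?h = "half_error_distance c (indexing_receive n D R)"
  have len: "length S = n" "length ?x = n"
    using assms(1,3) unfolding indexing_algorithm_def by auto
  have corr: "corruption (real n * \<delta>) ?x R A" using assms(4) by (simp add: indexing_send_def)
  then have al: "alignment ?x R A" and edits: "real (num_edits ?x R A) \<le> real n * \<delta>"
    unfolding corruption_def by auto
  have corrS: "corruption (real n * \<delta>) S (map snd R) A"
    using corruption_map[OF corr, of snd] len(1) assms(3) by (simp add: map_snd_zip)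
  then have mis: "card (misdecoded_positions A (D (map snd R))) \<le> k"
    using assms(2) unfolding at_most_misdecodings_def misdecoded_positions_def by blast
  note bounds = half_error_distance_indexing_receive_le_num_edits[OF al len(2), of D,
      unfolded map_fst_zip[of c S, OF assms(3)[folded len(1)]]]
  have "?h \<le> num_edits ?x R A + 2 * k" using bounds(1) mis by linarith
  then have "real ?h \<le> real (num_edits ?x R A) + 2 * real k"
    by (metis of_nat_add of_nat_le_iff of_nat_mult of_nat_numeral)
  moreover have "real ?h \<le> real (num_edits ?x R A) + real k" if "error_free n \<delta> S D"
  proof -
    have "?h \<le> num_edits ?x R A + k"
      using bounds(2)[OF error_free_incorrect_outputs_empty[OF that corrS, unfolded length_map]] mis
      by linarith
    then show ?thesis by (metis of_nat_add of_nat_le_iff)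
  qed
  ultimately show ?thesis using edits by linarith
qed

end
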